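(* Let $R$ be a commutative unital ring and $E$ an $R$-module such that $\mathrm{Ass}_R(E)$ is compact in the flat topology of $\mathrm{Spec}(R)$. Suppose that $S$ is a multiplicatively closed subset of $R$ with $E_S=0$. Then there is some $a\in S$ such that $E_a=0$, i.e. $a\in\mathcal O_R(E)$.
   Context: $\mathrm{Ass}_R(E)$ (the weak assassinator) is the set of prime ideals $P$ of $R$ that are minimal among the prime ideals containing $0:_Rx$ for some $x\in E$. The flat topology on $\mathrm{Spec}(R)$ is the topology whose closed sets are the images of $\mathrm{Spec}(T)\to\mathrm{Spec}(R)$ for flat ring morphisms $R\to T$; the sets $\mathrm V(I)=\{P\mid I\subseteq P\}$ with $I$ a finitely generated ideal form a basis of its open sets. For $a\in R$, $E_a$ is the localization of $E$ at $\{a^n\mid n\in\mathbb N\}$, and $\mathcal O_R(E)=\{a\in R\mid E_a=0\}$. Compactness does not require Hausdorffness. *)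

theory Defs
  imports "HOL-Algebra.Module" "HOL-Algebra.Ideal" "HOL-Analysis.Abstract_Topology"
begin

text \<open>Prime spectrum of a commutative ring (prime ideals are proper by the library definition).\<close>
definition Spec :: "('a, 'b) ring_scheme \<Rightarrow> 'a set set" where
  "Spec R = {P. primeideal P R}"

definition Vset :: "('a, 'b) ring_scheme \<Rightarrow> 'a set \<Rightarrow> 'a set set" where
  "Vset R I = {P \<in> Spec R. I \<subseteq> P}"

definition fg_ideal :: "('a, 'b) ring_scheme \<Rightarrow> 'a set \<Rightarrow> bool" where
  "fg_ideal R I \<longleftrightarrow> (\<exists>G. finite G \<and> G \<subseteq> carrier R \<and> I = Idl\<^bsub>R\<^esub> G)"

definition flat_topology :: "('a, 'b) ring_scheme \<Rightarrow> 'a set topology" where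
  "flat_topology R = topology_generated_by {Vset R I | I. fg_ideal R I}"

definition ann :: "('a, 'b) ring_scheme \<Rightarrow> ('a, 'c, 'd) module_scheme \<Rightarrow> 'c \<Rightarrow> 'a set" where
  "ann R E x = {r \<in> carrier R. r \<odot>\<^bsub>E\<^esub> x = \<zero>\<^bsub>E\<^esub>}"

text \<open>Weak assassinator: primes minimal among the primes containing 0 :_R x for some x in E.\<close>
definition wAss :: "('a, 'b) ring_scheme \<Rightarrow> ('a, 'c, 'd) module_scheme \<Rightarrow> 'a set set" where
  "wAss R E = {P \<in> Spec R. \<exists>x \<in> carrier E. ann R E x \<subseteq> P \<and>
       (\<forall>Q \<in> Spec R. ann R E x \<subseteq> Q \<and> Q \<subseteq> P \<longrightarrow> Q = P)}"

definition mult_closed :: "('a, 'b) ring_scheme \<Rightarrow> 'a set \<Rightarrow> bool" where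
  "mult_closed R S \<longleftrightarrow> S \<subseteq> carrier R \<and> \<one>\<^bsub>R\<^esub> \<in> S \<and>
       (\<forall>s \<in> S. \<forall>t \<in> S. s \<otimes>\<^bsub>R\<^esub> t \<in> S)"

text \<open>E_S = 0: unfolding the definition of the localization, every x/1 vanishes,
  i.e. every element of E is killed by some element of S.\<close>
definition loc_zero :: "('a, 'b) ring_scheme \<Rightarrow> ('a, 'c, 'd) module_scheme \<Rightarrow> 'a set \<Rightarrow> bool" where
  "loc_zero R E S \<longleftrightarrow> (\<forall>x \<in> carrier E. \<exists>s \<in> S. s \<odot>\<^bsub>E\<^esub> x = \<zero>\<^bsub>E\<^esub>)"

definition powers :: "('a, 'b) ring_scheme \<Rightarrow> 'a \<Rightarrow> 'a set" where
  "powers R a = {a [^]\<^bsub>R\<^esub> (n::nat) | n. True}"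

definition O_set :: "('a, 'b) ring_scheme \<Rightarrow> ('a, 'c, 'd) module_scheme \<Rightarrow> 'a set" where
  "O_set R E = {a \<in> carrier R. loc_zero R E (powers R a)}"

end

theory Submission
  imports Defs "HOL-Algebra.Ring_Divisibility"
begin

(* Every P in wAss R E contains some ann x, which meets S because E_S = 0; so the flat-open sets
   V(s), s in S, cover wAss R E. Compactness leaves finitely many s_1, ..., s_n, and their product
   a in S lies in every member of wAss R E. If some x were not killed by a power of a, Krull's
   argument would give a prime over ann x avoiding a, and a prime minimal over ann x inside it
   would be a member of wAss R E not containing a. *)

lemma subset_Zorn_nonempty_dual:
  assumes "\<A> \<noteq> {}" and ch: "\<And>\<C>. \<lbrakk>\<C> \<noteq> {}; subset.chain \<A> \<C>\<rbrakk> \<Longrightarrow> \<Inter>\<C> \<in> \<A>"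
  shows "\<exists>M\<in>\<A>. \<forall>X\<in>\<A>. X \<subseteq> M \<longrightarrow> X = M"
proof -
  have "\<exists>N\<in>uminus ` \<A>. \<forall>X\<in>uminus ` \<A>. N \<subseteq> X \<longrightarrow> X = N"
  proof (rule subset_Zorn_nonempty)
    show "uminus ` \<A> \<noteq> {}" using assms(1) by blast
    fix \<C> assume "\<C> \<noteq> {}" "subset.chain (uminus ` \<A>) \<C>"
    then have "uminus ` \<C> \<noteq> {}" "subset.chain \<A> (uminus ` \<C>)"
      by (auto simp: subset_chain_def)
    then have "\<Inter>(uminus ` \<C>) \<in> \<A>" by (rule ch)
    moreover have "\<Union>\<C> = - \<Inter>(uminus ` \<C>)" by auto
    ultimately show "\<Union>\<C> \<in> uminus ` \<A>" by (rule image_eqI[rotated])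
  qed
  then obtain N where N: "N \<in> uminus ` \<A>" and max: "\<forall>X\<in>uminus ` \<A>. N \<subseteq> X \<longrightarrow> X = N" ..
  from N obtain M where "M \<in> \<A>" and "N = - M" by (rule imageE) simp
  with max \<open>M \<in> \<A>\<close> show ?thesis by auto
qed

lemma (in cring) primeideal_Inter_chain:
  assumes "\<C> \<noteq> {}" and "subset.chain {P. primeideal P R} \<C>"
  shows "primeideal (\<Inter>\<C>) R"
proof -
  have prime: "\<And>P. P \<in> \<C> \<Longrightarrow> primeideal P R"
    and chain: "\<And>P Q. P \<in> \<C> \<Longrightarrow> Q \<in> \<C> \<Longrightarrow> P \<subseteq> Q \<or> Q \<subseteq> P"
    using assms(2) by (auto simp: subset_chain_def)
  obtain P0 where "P0 \<in> \<C>" using assms(1) by blast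
  show ?thesis
  proof (rule primeidealI[OF i_Intersect[OF primeideal.axioms(1)[OF prime] assms(1)] is_cring])
    show "carrier R \<noteq> \<Inter>\<C>"
      using primeideal.I_notcarr[OF prime] ideal.Icarr[OF primeideal.axioms(1)[OF prime]] \<open>P0 \<in> \<C>\<close>
      by blast
    show "x \<in> \<Inter>\<C> \<or> y \<in> \<Inter>\<C>" if xy: "x \<in> carrier R" "y \<in> carrier R" "x \<otimes> y \<in> \<Inter>\<C>" for x y
    proof (rule ccontr)
      assume "\<not> ?thesis"
      then obtain P Q where "P \<in> \<C>" "Q \<in> \<C>" "x \<notin> P" "y \<notin> Q" by blast
      then obtain K where K: "K \<in> \<C>" "x \<notin> K" "y \<notin> K" using chain[of P Q] by blast
      show False using primeideal.I_prime[OF prime[OF K(1)] xy(1,2)] xy(3) K by blast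
    qed
  qed
qed

lemma (in cring) exists_minimal_primeideal_below:
  assumes "primeideal P R" and "I \<subseteq> P"
  shows "\<exists>Q. primeideal Q R \<and> I \<subseteq> Q \<and> Q \<subseteq> P \<and>
           (\<forall>Q'. primeideal Q' R \<and> I \<subseteq> Q' \<and> Q' \<subseteq> Q \<longrightarrow> Q' = Q)"
proof -
  define \<A> where "\<A> = {Q. primeideal Q R \<and> I \<subseteq> Q \<and> Q \<subseteq> P}"
  have "\<exists>Q\<in>\<A>. \<forall>X\<in>\<A>. X \<subseteq> Q \<longrightarrow> X = Q"
  proof (rule subset_Zorn_nonempty_dual)
    show "\<A> \<noteq> {}" using assms unfolding \<A>_def by blast
    fix \<C> assume "\<C> \<noteq> {}" "subset.chain \<A> \<C>"
    then have "subset.chain {P. primeideal P R} \<C>" "I \<subseteq> \<Inter>\<C>" "\<Inter>\<C> \<subseteq> P"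
      by (auto simp: \<A>_def subset_chain_def)
    with \<open>\<C> \<noteq> {}\<close> show "\<Inter>\<C> \<in> \<A>" by (simp add: \<A>_def primeideal_Inter_chain)
  qed
  then obtain Q where Q: "Q \<in> \<A>" and min: "\<And>X. X \<in> \<A> \<Longrightarrow> X \<subseteq> Q \<Longrightarrow> X = Q" by blast
  have "Q' = Q" if "primeideal Q' R" "I \<subseteq> Q'" "Q' \<subseteq> Q" for Q'
    using Q that by (intro min) (auto simp: \<A>_def)
  with Q show ?thesis unfolding \<A>_def by (intro exI[of _ Q]) auto
qed

lemma (in cring) set_add_cgenideal_mult_mem:
  assumes M: "ideal M R" and x: "x \<in> carrier R" and y: "y \<in> carrier R" and "x \<otimes> y \<in> M"
    and "u \<in> M <+>\<^bsub>R\<^esub> PIdl x" and "v \<in> M <+>\<^bsub>R\<^esub> PIdl y"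
  shows "u \<otimes> v \<in> M"
proof -
  interpret M: ideal M R by (rule M)
  obtain p r where p: "p \<in> M" and r: "r \<in> carrier R" and u: "u = p \<oplus> r \<otimes> x"
    using \<open>u \<in> M <+>\<^bsub>R\<^esub> PIdl x\<close> unfolding set_add_def' cgenideal_def by blast
  obtain q s where q: "q \<in> M" and s: "s \<in> carrier R" and v: "v = q \<oplus> s \<otimes> y"
    using \<open>v \<in> M <+>\<^bsub>R\<^esub> PIdl y\<close> unfolding set_add_def' cgenideal_def by blast
  have "p \<in> carrier R" "q \<in> carrier R" using p q by (auto intro: M.Icarr)
  then have "u \<otimes> v = p \<otimes> v \<oplus> ((r \<otimes> x) \<otimes> q \<oplus> (r \<otimes> s) \<otimes> (x \<otimes> y))"
    using r s x y by (simp add: u v l_distr r_distr m_ac a_ac)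
  also have "\<dots> \<in> M"
  proof (intro M.a_closed)
    show "p \<otimes> v \<in> M" using p q s y by (simp add: v M.I_r_closed M.Icarr)
    show "(r \<otimes> x) \<otimes> q \<in> M" using q r x by (simp add: M.I_l_closed)
    show "(r \<otimes> s) \<otimes> (x \<otimes> y) \<in> M" using r s \<open>x \<otimes> y \<in> M\<close> by (simp add: M.I_l_closed)
  qed
  finally show ?thesis .
qed

lemma (in cring) primeideal_if_maximal_avoiding_powers:
  assumes M: "ideal M R" and a: "a \<in> carrier R" and avoid: "\<And>n::nat. a [^] n \<notin> M"
    and max: "\<And>J. \<lbrakk>ideal J R; M \<subseteq> J; \<forall>n::nat. a [^] n \<notin> J\<rbrakk> \<Longrightarrow> J = M"
  shows "primeideal M R"
proof (rule primeidealI[OF M is_cring])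
  have enlarge: "\<exists>n::nat. a [^] n \<in> M <+>\<^bsub>R\<^esub> PIdl x" if x: "x \<in> carrier R" "x \<notin> M" for x
  proof (rule ccontr)
    assume "\<nexists>n::nat. a [^] n \<in> M <+>\<^bsub>R\<^esub> PIdl x"
    moreover have "ideal (M <+>\<^bsub>R\<^esub> PIdl x) R" by (rule add_ideals[OF M cgenideal_ideal[OF x(1)]])
    moreover have sub: "M \<union> PIdl x \<subseteq> M <+>\<^bsub>R\<^esub> PIdl x"
      unfolding union_genideal[OF M cgenideal_ideal[OF x(1)], symmetric]
      using M[THEN ideal.Icarr] cgenideal_ideal[OF x(1), THEN ideal.Icarr]
      by (intro genideal_self) blast
    ultimately have "M <+>\<^bsub>R\<^esub> PIdl x = M" using max by blast
    then show False using cgenideal_self[OF x(1)] x(2) sub by blast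
  qed
  show "carrier R \<noteq> M" using avoid[of 0] by auto
  show "x \<in> M \<or> y \<in> M" if xy: "x \<in> carrier R" "y \<in> carrier R" "x \<otimes> y \<in> M" for x y
  proof (rule ccontr)
    assume "\<not> ?thesis"
    then obtain m n :: nat where "a [^] m \<in> M <+>\<^bsub>R\<^esub> PIdl x" "a [^] n \<in> M <+>\<^bsub>R\<^esub> PIdl y"
      using enlarge[of x] enlarge[of y] xy(1,2) by blast
    then have "a [^] m \<otimes> a [^] n \<in> M" using set_add_cgenideal_mult_mem M xy by blast
    then show False using avoid[of "m + n"] a by (simp add: nat_pow_mult)
  qed
qed

lemma (in cring) exists_primeideal_avoiding_powers:
  assumes I: "ideal I R" and a: "a \<in> carrier R" and avoid: "\<And>n::nat. a [^] n \<notin> I"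
  shows "\<exists>P. primeideal P R \<and> I \<subseteq> P \<and> a \<notin> P"
proof -
  define \<A> where "\<A> = {J. ideal J R \<and> I \<subseteq> J \<and> (\<forall>n::nat. a [^] n \<notin> J)}"
  have "\<exists>M\<in>\<A>. \<forall>X\<in>\<A>. M \<subseteq> X \<longrightarrow> X = M"
  proof (rule subset_Zorn_nonempty)
    show "\<A> \<noteq> {}" using I avoid unfolding \<A>_def by blast
    fix \<C> assume "\<C> \<noteq> {}" "subset.chain \<A> \<C>"
    moreover from this have "ideal (\<Union>\<C>) R"
      using chain_Union_is_ideal[of \<C>] by (auto simp: \<A>_def subset_chain_def)
    ultimately show "\<Union>\<C> \<in> \<A>" by (auto simp: \<A>_def subset_chain_def)
  qed
  then obtain M where "M \<in> \<A>" and max: "\<And>X. X \<in> \<A> \<Longrightarrow> M \<subseteq> X \<Longrightarrow> X = M" by blast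
  then have M: "ideal M R" "I \<subseteq> M" and M_avoid: "\<And>n::nat. a [^] n \<notin> M" by (auto simp: \<A>_def)
  have "primeideal M R"
  proof (rule primeideal_if_maximal_avoiding_powers[OF M(1) a M_avoid])
    show "J = M" if "ideal J R" "M \<subseteq> J" "\<forall>n::nat. a [^] n \<notin> J" for J
      using that M(2) by (intro max) (auto simp: \<A>_def)
  qed
  moreover have "a \<notin> M" using M_avoid[of 1] a by simp
  ultimately show ?thesis using M(2) by blast
qed

lemma (in Module.module) ideal_ann:
  assumes "x \<in> carrier M"
  shows "ideal (ann R M x) R"
proof (rule idealI[OF R.ring_axioms])
  show "subgroup (ann R M x) (add_monoid R)"
    using assms by unfold_locales (auto simp: ann_def smult_l_distr smult_l_minus simp flip: a_inv_def)
  show "c \<otimes> r \<in> ann R M x" "r \<otimes> c \<in> ann R M x" if "r \<in> ann R M x" "c \<in> carrier R" for r c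
    using that assms by (auto simp: ann_def smult_assoc1 m_comm[of r c])
qed

lemma (in Module.module) O_setI_wAss:
  assumes a: "a \<in> carrier R" and "\<And>P. P \<in> wAss R M \<Longrightarrow> a \<in> P"
  shows "a \<in> O_set R M"
  unfolding O_set_def loc_zero_def powers_def
proof (intro CollectI conjI a ballI)
  fix x assume x: "x \<in> carrier M"
  show "\<exists>s\<in>{a [^]\<^bsub>R\<^esub> (n::nat) |n. True}. s \<odot>\<^bsub>M\<^esub> x = \<zero>\<^bsub>M\<^esub>"
  proof (rule ccontr)
    assume "\<not> ?thesis"
    then have "a [^]\<^bsub>R\<^esub> n \<notin> ann R M x" for n :: nat unfolding ann_def by blast
    then obtain P where P: "primeideal P R" "ann R M x \<subseteq> P" "a \<notin> P"
      using exists_primeideal_avoiding_powers[OF ideal_ann[OF x] a] by blast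
    then obtain Q where "primeideal Q R" "ann R M x \<subseteq> Q" "Q \<subseteq> P"
        "\<forall>Q'. primeideal Q' R \<and> ann R M x \<subseteq> Q' \<and> Q' \<subseteq> Q \<longrightarrow> Q' = Q"
      using exists_minimal_primeideal_below by blast
    then have "Q \<in> wAss R M" unfolding wAss_def Spec_def using x by blast
    with assms(2) \<open>Q \<subseteq> P\<close> \<open>a \<notin> P\<close> show False by blast
  qed
qed

lemma (in ring) Vset_genideal_singleton:
  assumes "s \<in> carrier R"
  shows "Vset R (Idl {s}) = {P \<in> Spec R. s \<in> P}"
proof -
  have "Idl {s} \<subseteq> P \<longleftrightarrow> s \<in> P" if "primeideal P R" for P
    using genideal_self'[OF assms] genideal_minimal[OF primeideal.axioms(1)[OF that]] by blast
  then show ?thesis unfolding Vset_def Spec_def by blast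
qed

lemma openin_flat_topology_Vset:
  assumes "fg_ideal R I"
  shows "openin (flat_topology R) (Vset R I)"
  unfolding flat_topology_def openin_topology_generated_by_iff
  using assms by (blast intro: generate_topology_on.Basis)

lemma compactin_finite_subcover_image:
  assumes "compactin X K" and "\<And>i. i \<in> I \<Longrightarrow> openin X (U i)" and "K \<subseteq> (\<Union>i\<in>I. U i)"
  obtains J where "finite J" "J \<subseteq> I" "K \<subseteq> (\<Union>j\<in>J. U j)"
proof -
  have "\<forall>V\<in>U ` I. openin X V" using assms(2) by auto
  then have "\<exists>\<F>. finite \<F> \<and> \<F> \<subseteq> U ` I \<and> K \<subseteq> \<Union>\<F>"
    using assms(1,3) unfolding compactin_def by simp
  then obtain \<F> where "finite \<F>" "\<F> \<subseteq> U ` I" "K \<subseteq> \<Union>\<F>" by blast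
  moreover obtain J where "J \<subseteq> I" "finite J" "\<F> = U ` J"
    using finite_subset_image[OF \<open>finite \<F>\<close> \<open>\<F> \<subseteq> U ` I\<close>] by blast
  ultimately show ?thesis by (intro that[of J]) simp_all
qed

lemma (in Module.module) wAss_subset_Union_Vset:
  assumes "loc_zero R M S" and "S \<subseteq> carrier R"
  shows "wAss R M \<subseteq> (\<Union>s\<in>S. Vset R (Idl\<^bsub>R\<^esub> {s}))"
proof
  fix P assume "P \<in> wAss R M"
  then obtain x where P: "P \<in> Spec R" and x: "x \<in> carrier M" "ann R M x \<subseteq> P"
    unfolding wAss_def by blast
  obtain s where s: "s \<in> S" "s \<odot>\<^bsub>M\<^esub> x = \<zero>\<^bsub>M\<^esub>"
    using assms(1) x(1) unfolding loc_zero_def by blast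
  moreover have s_carr: "s \<in> carrier R" using assms(2) s(1) by blast
  ultimately have "s \<in> P" using x(2) unfolding ann_def by blast
  with P have "P \<in> Vset R (Idl\<^bsub>R\<^esub> {s})" by (simp add: Vset_genideal_singleton[OF s_carr])
  with s(1) show "P \<in> (\<Union>s\<in>S. Vset R (Idl\<^bsub>R\<^esub> {s}))" by blast
qed

lemma mult_closed_exists_mem_primeideals_meeting:
  assumes "mult_closed R S" and "finite T" and "T \<subseteq> S"
  shows "\<exists>a\<in>S. \<forall>P. primeideal P R \<longrightarrow> T \<inter> P \<noteq> {} \<longrightarrow> a \<in> P"
  using assms(2,3)
proof (induction T rule: finite_induct)
  case empty
  then show ?case using assms(1) unfolding mult_closed_def by blast
next
  case (insert t T)
  then obtain a where a: "a \<in> S" "\<And>P. primeideal P R \<Longrightarrow> T \<inter> P \<noteq> {} \<Longrightarrow> a \<in> P" by auto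
  have t: "t \<in> carrier R" and a_carr: "a \<in> carrier R" and ta: "t \<otimes>\<^bsub>R\<^esub> a \<in> S"
    using insert.prems assms(1) a(1) unfolding mult_closed_def by auto
  have "t \<otimes>\<^bsub>R\<^esub> a \<in> P" if P: "primeideal P R" "insert t T \<inter> P \<noteq> {}" for P
  proof (cases "t \<in> P")
    case True
    then show ?thesis using ideal.I_r_closed[OF primeideal.axioms(1)[OF P(1)] _ a_carr] by blast
  next
    case False
    with P have "a \<in> P" using a(2) by blast
    then show ?thesis using ideal.I_l_closed[OF primeideal.axioms(1)[OF P(1)] _ t] by blast
  qed
  with ta show ?case by blast
qed

theorem proposition2p10:
  fixes R :: "('a, 'b) ring_scheme" and E :: "('a, 'c, 'd) module_scheme" and S :: "'a set"
  assumes "Module.module R E"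
    and "compactin (flat_topology R) (wAss R E)"
    and "mult_closed R S"
    and "loc_zero R E S"
  shows "\<exists>a \<in> S. a \<in> O_set R E"
proof -
  interpret Module.module R E by (rule assms(1))
  have S: "S \<subseteq> carrier R" using assms(3) unfolding mult_closed_def by blast
  have Vset_open: "openin (flat_topology R) (Vset R (Idl\<^bsub>R\<^esub> {s}))" if "s \<in> S" for s
    using that S by (intro openin_flat_topology_Vset) (auto simp: fg_ideal_def)
  obtain T where T: "finite T" "T \<subseteq> S" and cover: "wAss R E \<subseteq> (\<Union>t\<in>T. Vset R (Idl\<^bsub>R\<^esub> {t}))"
    by (rule compactin_finite_subcover_image[OF assms(2) Vset_open wAss_subset_Union_Vset[OF assms(4) S]])
  from T obtain a where "a \<in> S" and a: "\<And>P. primeideal P R \<Longrightarrow> T \<inter> P \<noteq> {} \<Longrightarrow> a \<in> P"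
    using mult_closed_exists_mem_primeideals_meeting[OF assms(3) T] by blast
  have "a \<in> P" if "P \<in> wAss R E" for P
  proof -
    from that cover obtain t where "t \<in> T" "P \<in> Vset R (Idl\<^bsub>R\<^esub> {t})" by blast
    with T S have "t \<in> T \<inter> P" "primeideal P R" by (auto simp: Vset_genideal_singleton Spec_def)
    with a show ?thesis by blast
  qed
  then have "a \<in> O_set R E" using \<open>a \<in> S\<close> S by (intro O_setI_wAss) auto
  with \<open>a \<in> S\<close> show ?thesis ..
qed

end
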